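(* Consider a $K$-armed stochastic bandit ($K\ge2$) whose arm distributions $\nu_a$ are arbitrary probability distributions on $[0,1]$. Let $f(t)=\log(t)+3\log(\log(t))$ for $t\ge3$ and $f(1)=f(2)=f(3)$, and run the following \texttt{UCB} algorithm: pull each arm once in rounds $1,\dots,K$; then at each step $t+1>K$ (for $t=K,\dots,T-1$) pull an arm maximizing $\hat\mu_a(t)+\sqrt{f(t)/(2N_a(t))}$ (equivalently, the \texttt{kl-UCB} algorithm with divergence $d_{\mathrm{qua}}(\mu,\mu')=2(\mu-\mu')^2$ and this $f$). Then for every suboptimal arm $a$ (i.e. $\mu_a<\mu^\star$) and every horizon $T\ge3$, \[ \mathbb{E}[N_a(T)]\le\frac{\log(T)}{2(\mu^\star-\mu_a)^2}+\frac{2\sqrt{\pi}}{(\mu^\star-\mu_a)^2}\sqrt{\log(T)+3\log(\log(T))}+\Big(4e+\frac{3}{2(\mu^\star-\mu_a)^2}\Big)\log(\log(T))+\frac{8}{(\mu^\star-\mu_a)^2}+6. \]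
   Context: Bandit protocol: at each round $t\ge1$ the player picks an arm $A_t$ based on past information and receives a reward $Y_t$ drawn independently from $\nu_{A_t}$. $\mu_a$ is the mean of $\nu_a$, $\mu^\star=\max_a\mu_a$, $N_a(t)=\sum_{s=1}^t\mathbf{1}\{A_s=a\}$, and $\hat\mu_a(t)=\frac{1}{N_a(t)}\sum_{s=1}^tY_s\mathbf{1}\{A_s=a\}$. *)

theory Defs
  imports "HOL-Probability.Probability"
begin

text \<open>A history is the list of (arm pulled, reward received) for rounds 1..t.\<close>
type_synonym history = "(nat \<times> real) list"

text \<open>Reward-table model: omega (a, n) is the reward of the (n+1)-th pull of arm a.
  The policy maps the current history to the next arm.\<close>
fun run :: "(history \<Rightarrow> nat) \<Rightarrow> (nat \<times> nat \<Rightarrow> real) \<Rightarrow> nat \<Rightarrow> history" where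
  "run \<pi> \<omega> 0 = []"
| "run \<pi> \<omega> (Suc t) =
     (let h = run \<pi> \<omega> t; a = \<pi> h
      in h @ [(a, \<omega> (a, length (filter (\<lambda>p. fst p = a) h)))])"

definition num_pulls :: "history \<Rightarrow> nat \<Rightarrow> nat" where
  "num_pulls h a = length (filter (\<lambda>p. fst p = a) h)"

definition emp_mean :: "history \<Rightarrow> nat \<Rightarrow> real" where
  "emp_mean h a = (\<Sum>p\<leftarrow>filter (\<lambda>p. fst p = a) h. snd p) / real (num_pulls h a)"

definition ucb_f :: "nat \<Rightarrow> real" where
  "ucb_f t = ln (real (max t 3)) + 3 * ln (ln (real (max t 3)))"

definition ucb_index :: "history \<Rightarrow> nat \<Rightarrow> real" where
  "ucb_index h a = emp_mean h a + sqrt (ucb_f (length h) / (2 * real (num_pulls h a)))"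

text \<open>UCB with arbitrary (deterministic, history-dependent) tie-breaking:
  rounds 1..K pull arms 0..K-1; afterwards pull a maximiser of the index.\<close>
definition is_ucb_policy :: "nat \<Rightarrow> (history \<Rightarrow> nat) \<Rightarrow> bool" where
  "is_ucb_policy K \<pi> \<longleftrightarrow>
     (\<forall>h. (length h < K \<longrightarrow> \<pi> h = length h) \<and>
          (K \<le> length h \<longrightarrow> \<pi> h < K \<and> (\<forall>b<K. ucb_index h b \<le> ucb_index h (\<pi> h))))"

definition reward_space :: "nat \<Rightarrow> (nat \<Rightarrow> real measure) \<Rightarrow> (nat \<times> nat \<Rightarrow> real) measure" where
  "reward_space K \<nu> = (\<Pi>\<^sub>M i\<in>{0..<K} \<times> (UNIV :: nat set). \<nu> (fst i))"

definition arm_mean :: "(nat \<Rightarrow> real measure) \<Rightarrow> nat \<Rightarrow> real" where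
  "arm_mean \<nu> a = (\<integral>x. x \<partial>(\<nu> a))"

definition opt_mean :: "nat \<Rightarrow> (nat \<Rightarrow> real measure) \<Rightarrow> real" where
  "opt_mean K \<nu> = Max (arm_mean \<nu> ` {0..<K})"

end

theory Submission
  imports Defs
begin

text \<open>Fix an optimal arm \<open>s\<close>. After the initial round robin, arm \<open>a\<close> is pulled at round \<open>t\<close>
  only if the index of \<open>s\<close> is below \<open>\<mu>\<^sup>\<star>\<close> for some sample size \<open>n \<le> t\<close>, or the index of \<open>a\<close>
  computed from its current sample size is at least \<open>\<mu>\<^sup>\<star>\<close>; distinct pulls of \<open>a\<close> have distinct
  sample sizes. The first event is handled by peeling the sample sizes into geometric blocks of
  ratio \<open>1 + 1/f(t)\<close>, each controlled by a maximal Hoeffding inequality, which gives probability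
  \<open>4e/(t log t)\<close> and hence \<open>4e log log T\<close> in total. The second has probability at most
  \<open>exp (-2 (\<Delta> \<surd>n - \<surd>(f(T)/2))\<^sup>2)\<close>; this is trivially bounded for \<open>n \<le> (\<surd>(f(T)/2) + 1)\<^sup>2/\<Delta>\<^sup>2\<close>
  and decays geometrically beyond, which produces the terms in \<open>log T/(2\<Delta>\<^sup>2)\<close> and \<open>\<surd>f(T)/\<Delta>\<^sup>2\<close>.\<close>

section \<open>Independence and a maximal Hoeffding inequality\<close>

lemma (in prob_space) indep_sets_reindex:
  assumes "indep_sets F I" and "inj_on h J" and "h ` J \<subseteq> I"
  shows "indep_sets (\<lambda>j. F (h j)) J"
  unfolding indep_sets_def
proof (intro conjI ballI allI impI)
  show "F (h j) \<subseteq> events" if "j \<in> J" for j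
    using assms that by (auto simp: indep_sets_def)
next
  fix J' A assume J': "J' \<subseteq> J" "J' \<noteq> {}" "finite J'" and A: "A \<in> Pi J' (\<lambda>j. F (h j))"
  have inj: "inj_on h J'" using assms(2) J' inj_on_subset by blast
  define B where "B i = A (inv_into J' h i)" for i
  have B: "B (h j) = A j" if "j \<in> J'" for j
    using that inj by (simp add: B_def)
  have "h ` J' \<subseteq> I" "h ` J' \<noteq> {}" "finite (h ` J')" "B \<in> Pi (h ` J') F"
    using assms(3) J' A B by auto
  then have "prob (\<Inter>i\<in>h ` J'. B i) = (\<Prod>i\<in>h ` J'. prob (B i))"
    using assms(1) unfolding indep_sets_def by blast
  moreover have "(\<Inter>i\<in>h ` J'. B i) = (\<Inter>j\<in>J'. A j)" using B by auto
  moreover have "(\<Prod>i\<in>h ` J'. prob (B i)) = (\<Prod>j\<in>J'. prob (A j))"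
    by (simp add: prod.reindex[OF inj] B)
  ultimately show "prob (\<Inter>j\<in>J'. A j) = (\<Prod>j\<in>J'. prob (A j))" by simp
qed

lemma (in prob_space) indep_vars_reindex:
  assumes indep: "indep_vars M' X I" and inj: "inj_on h J" and sub: "h ` J \<subseteq> I"
  shows "indep_vars (\<lambda>j. M' (h j)) (\<lambda>j. X (h j)) J"
  using indep sub unfolding indep_vars_def2
  by (auto intro!: indep_sets_reindex[OF _ inj sub, where F = "\<lambda>i. {X i -` A \<inter> space M |A. A \<in> sets (M' i)}"])

lemma (in prob_space) indep_var_nn_integral:
  fixes X Y :: "'a \<Rightarrow> ennreal"
  assumes "indep_var borel X borel Y"
  shows "(\<integral>\<^sup>+\<omega>. X \<omega> * Y \<omega> \<partial>M) = (\<integral>\<^sup>+\<omega>. X \<omega> \<partial>M) * (\<integral>\<^sup>+\<omega>. Y \<omega> \<partial>M)"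
proof -
  have "(\<lambda>_::bool. borel::ennreal measure) = case_bool borel borel"
    by (simp add: fun_eq_iff split: bool.split)
  then have "indep_vars (\<lambda>_. borel) (case_bool X Y) UNIV"
    using assms unfolding indep_var_def by simp
  then have "(\<integral>\<^sup>+\<omega>. (\<Prod>i\<in>UNIV. case_bool X Y i \<omega>) \<partial>M) = (\<Prod>i\<in>UNIV. \<integral>\<^sup>+\<omega>. case_bool X Y i \<omega> \<partial>M)"
    by (intro indep_vars_nn_integral) (auto split: bool.split)
  then show ?thesis by (simp add: UNIV_bool mult.commute)
qed

definition first_passage :: "(nat \<Rightarrow> real) \<Rightarrow> real \<Rightarrow> nat \<Rightarrow> bool" where
  "first_passage s x k \<longleftrightarrow> x \<le> s k \<and> (\<forall>j<k. s j < x)"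

lemma first_passage_unique: "first_passage s x j \<Longrightarrow> first_passage s x k \<Longrightarrow> j = k"
  unfolding first_passage_def by (metis linorder_neqE_nat not_le)

lemma ex_first_passage:
  assumes "x \<le> s n"
  shows "\<exists>k\<le>n. first_passage s x k"
proof -
  define k where "k = (LEAST k. x \<le> s k)"
  have "x \<le> s k" "k \<le> n"
    using LeastI[of "\<lambda>k. x \<le> s k", OF assms] Least_le[of "\<lambda>k. x \<le> s k", OF assms] by (simp_all add: k_def)
  moreover have "s j < x" if "j < k" for j
    using not_less_Least[of j "\<lambda>k. x \<le> s k"] that by (simp add: k_def)
  ultimately show ?thesis by (auto simp: first_passage_def)
qed

locale indep_centered_bounded_sequence = prob_space +
  fixes X :: "nat \<Rightarrow> 'a \<Rightarrow> real" and a b :: "nat \<Rightarrow> real"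
  assumes indep: "indep_vars (\<lambda>_. borel) X UNIV"
    and AE_in_interval: "\<And>i. AE \<omega> in M. X i \<omega> \<in> {a i..b i}"
    and centered: "\<And>i. expectation (X i) = 0"
begin

lemma random_variable [measurable]: "X i \<in> borel_measurable M"
  using indep unfolding indep_vars_def by blast

lemma interval_bounded: "interval_bounded_random_variable M (X i) (a i) (b i)"
  by (intro interval_bounded_random_variable.intro interval_bounded_random_variable_axioms.intro
      prob_space_axioms random_variable AE_in_interval)

lemma integrable_exp: "integrable M (\<lambda>\<omega>. exp (l * X i \<omega>))"
proof (rule integrable_const_bound[where B = "exp (\<bar>l\<bar> * max \<bar>a i\<bar> \<bar>b i\<bar>)"])
  show "AE \<omega> in M. norm (exp (l * X i \<omega>)) \<le> exp (\<bar>l\<bar> * max \<bar>a i\<bar> \<bar>b i\<bar>)"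
    using AE_in_interval[of i]
  proof eventually_elim
    case (elim \<omega>)
    have "l * X i \<omega> \<le> \<bar>l\<bar> * \<bar>X i \<omega>\<bar>"
      by (simp add: abs_mult[symmetric])
    also have "\<dots> \<le> \<bar>l\<bar> * max \<bar>a i\<bar> \<bar>b i\<bar>"
      using elim by (intro mult_left_mono) auto
    finally show ?case by simp
  qed
qed measurable

lemma nn_integral_exp_ge_1: "1 \<le> (\<integral>\<^sup>+\<omega>. exp (l * X i \<omega>) \<partial>M)"
proof -
  have "integrable M (X i)"
    using interval_bounded_random_variable.integrable[OF interval_bounded] .
  then have "1 = expectation (\<lambda>\<omega>. 1 + l * X i \<omega>)"
    using centered[of i] by (simp add: prob_space)
  also have "\<dots> \<le> expectation (\<lambda>\<omega>. exp (l * X i \<omega>))"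
    using \<open>integrable M (X i)\<close> integrable_exp by (intro integral_mono) auto
  finally show ?thesis
    using integrable_exp by (simp add: nn_integral_eq_integral ennreal_1[symmetric] del: ennreal_1)
qed

lemma nn_integral_exp_sum:
  assumes "finite J"
  shows "(\<integral>\<^sup>+\<omega>. exp (l * (\<Sum>i\<in>J. X i \<omega>)) \<partial>M) = (\<Prod>i\<in>J. \<integral>\<^sup>+\<omega>. exp (l * X i \<omega>) \<partial>M)"
proof -
  have "(\<integral>\<^sup>+\<omega>. exp (l * (\<Sum>i\<in>J. X i \<omega>)) \<partial>M) = (\<integral>\<^sup>+\<omega>. (\<Prod>i\<in>J. ennreal (exp (l * X i \<omega>))) \<partial>M)"
    by (intro nn_integral_cong) (simp add: sum_distrib_left exp_sum prod_ennreal assms)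
  also have "\<dots> = (\<Prod>i\<in>J. \<integral>\<^sup>+\<omega>. exp (l * X i \<omega>) \<partial>M)"
    by (intro indep_vars_nn_integral assms indep_vars_compose2[OF indep_vars_subset[OF indep]]) auto
  finally show ?thesis .
qed

lemma nn_integral_exp_sum_ge_1:
  "finite J \<Longrightarrow> 1 \<le> (\<integral>\<^sup>+\<omega>. exp (l * (\<Sum>i\<in>J. X i \<omega>)) \<partial>M)"
  by (simp add: nn_integral_exp_sum nn_integral_exp_ge_1 prod_ge_1)

lemma nn_integral_exp_sum_le:
  assumes "finite J" and "l > 0"
  shows "(\<integral>\<^sup>+\<omega>. exp (l * (\<Sum>i\<in>J. X i \<omega>)) \<partial>M) \<le> exp (l\<^sup>2 * (\<Sum>i\<in>J. (b i - a i)\<^sup>2) / 8)"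
proof -
  have "(\<Prod>i\<in>J. \<integral>\<^sup>+\<omega>. exp (l * X i \<omega>) \<partial>M) \<le> (\<Prod>i\<in>J. ennreal (exp (l\<^sup>2 * (b i - a i)\<^sup>2 / 8)))"
    using interval_bounded_random_variable.Hoeffdings_lemma_nn_integral_0[OF interval_bounded \<open>l > 0\<close> centered]
    by (intro prod_mono_ennreal) auto
  also have "\<dots> = exp (l\<^sup>2 * (\<Sum>i\<in>J. (b i - a i)\<^sup>2) / 8)"
    by (simp add: prod_ennreal exp_sum[symmetric] sum_distrib_left sum_divide_distrib assms(1))
  finally show ?thesis by (simp add: nn_integral_exp_sum assms(1))
qed

lemma nn_integral_le_mult_exp_sum_disjoint:
  fixes g :: "(nat \<Rightarrow> real) \<Rightarrow> ennreal"
  assumes "J \<inter> L = {}" and "finite L" and g: "g \<in> borel_measurable (PiM J (\<lambda>_. borel))"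
  shows "(\<integral>\<^sup>+\<omega>. g (restrict (\<lambda>i. X i \<omega>) J) \<partial>M)
    \<le> (\<integral>\<^sup>+\<omega>. g (restrict (\<lambda>i. X i \<omega>) J) * exp (l * (\<Sum>i\<in>L. X i \<omega>)) \<partial>M)"
proof -
  define h :: "(nat \<Rightarrow> real) \<Rightarrow> ennreal" where "h v = exp (l * (\<Sum>i\<in>L. v i))" for v
  have h: "h \<in> borel_measurable (PiM L (\<lambda>_. borel))"
    unfolding h_def by (intro measurable_compose[OF borel_measurable_sum] measurable_ennreal)
      (auto intro: measurable_component_singleton)
  have "indep_var borel (\<lambda>\<omega>. g (restrict (\<lambda>i. X i \<omega>) J)) borel (\<lambda>\<omega>. h (restrict (\<lambda>i. X i \<omega>) L))"
    using indep_var_compose[OF indep_var_restrict[OF indep assms(1)] g h] by (simp add: comp_def)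
  then have "(\<integral>\<^sup>+\<omega>. g (restrict (\<lambda>i. X i \<omega>) J) * h (restrict (\<lambda>i. X i \<omega>) L) \<partial>M)
      = (\<integral>\<^sup>+\<omega>. g (restrict (\<lambda>i. X i \<omega>) J) \<partial>M) * (\<integral>\<^sup>+\<omega>. exp (l * (\<Sum>i\<in>L. X i \<omega>)) \<partial>M)"
    by (simp add: indep_var_nn_integral h_def)
  moreover have "(\<integral>\<^sup>+\<omega>. g (restrict (\<lambda>i. X i \<omega>) J) \<partial>M) * 1 \<le> \<dots>"
    using nn_integral_exp_sum_ge_1[OF assms(2)] by (intro mult_left_mono) auto
  ultimately show ?thesis by (simp add: h_def)
qed

definition passage_event :: "real \<Rightarrow> nat \<Rightarrow> 'a set" where
  "passage_event x k = {\<omega>\<in>space M. first_passage (\<lambda>n. \<Sum>i<n. X i \<omega>) x k}"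

lemma sets_passage_event [measurable]: "passage_event x k \<in> sets M"
  unfolding passage_event_def first_passage_def by measurable

text \<open>Chernoff's bound restricted to the event of a first passage at time \<open>k\<close>: the increments
  after \<open>k\<close> are independent of that event and their exponential moment is at least \<open>1\<close>.\<close>
lemma emeasure_passage_event_le:
  assumes "k \<le> N" and "0 \<le> l"
  shows "exp (l * x) * emeasure M (passage_event x k)
    \<le> (\<integral>\<^sup>+\<omega>. indicator (passage_event x k) \<omega> * ennreal (exp (l * (\<Sum>i<N. X i \<omega>))) \<partial>M)"
proof -
  define g :: "(nat \<Rightarrow> real) \<Rightarrow> ennreal" where
    "g v = indicator {v. first_passage (\<lambda>n. \<Sum>i<n. v i) x k} v * exp (l * (\<Sum>i<k. v i))" for v
  have [measurable]: "(\<lambda>v. \<Sum>i<n. v i) \<in> borel_measurable (PiM {..<k} (\<lambda>_. borel :: real measure))"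
    if "n \<le> k" for n
    using that by (intro borel_measurable_sum measurable_component_singleton) auto
  have g_measurable: "g \<in> borel_measurable (PiM {..<k} (\<lambda>_. borel))"
    unfolding g_def first_passage_def by measurable
  have g_passage: "g (restrict (\<lambda>i. X i \<omega>) {..<k})
      = indicator (passage_event x k) \<omega> * ennreal (exp (l * (\<Sum>i<k. X i \<omega>)))"
    if "\<omega> \<in> space M" for \<omega>
    using that by (simp add: g_def passage_event_def indicator_def first_passage_def)
  have "exp (l * x) * emeasure M (passage_event x k)
      = (\<integral>\<^sup>+\<omega>. ennreal (exp (l * x)) * indicator (passage_event x k) \<omega> \<partial>M)"
    by (simp add: nn_integral_cmult_indicator)
  also have "\<dots> \<le> (\<integral>\<^sup>+\<omega>. g (restrict (\<lambda>i. X i \<omega>) {..<k}) \<partial>M)"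
    using \<open>0 \<le> l\<close>
    by (intro nn_integral_mono) (auto simp: g_passage passage_event_def first_passage_def indicator_def mult_left_mono)
  also have "\<dots> \<le> (\<integral>\<^sup>+\<omega>. g (restrict (\<lambda>i. X i \<omega>) {..<k}) * exp (l * (\<Sum>i\<in>{k..<N}. X i \<omega>)) \<partial>M)"
    using g_measurable by (intro nn_integral_le_mult_exp_sum_disjoint) auto
  also have "\<dots> = (\<integral>\<^sup>+\<omega>. indicator (passage_event x k) \<omega> * ennreal (exp (l * (\<Sum>i<N. X i \<omega>))) \<partial>M)"
  proof (intro nn_integral_cong)
    fix \<omega> assume "\<omega> \<in> space M"
    have "(\<Sum>i<N. X i \<omega>) = (\<Sum>i<k. X i \<omega>) + (\<Sum>i\<in>{k..<N}. X i \<omega>)"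
      using \<open>k \<le> N\<close> by (simp add: lessThan_atLeast0 sum.atLeastLessThan_concat)
    then show "g (restrict (\<lambda>i. X i \<omega>) {..<k}) * ennreal (exp (l * (\<Sum>i\<in>{k..<N}. X i \<omega>)))
        = indicator (passage_event x k) \<omega> * ennreal (exp (l * (\<Sum>i<N. X i \<omega>)))"
      by (simp add: g_passage[OF \<open>\<omega> \<in> space M\<close>] distrib_left exp_add ennreal_mult' mult.assoc)
  qed
  finally show ?thesis .
qed

theorem maximal_Hoeffding_ineq:
  assumes "x > 0" and D_pos: "(\<Sum>i<N. (b i - a i)\<^sup>2) > 0"
  shows "prob {\<omega>\<in>space M. \<exists>n\<le>N. x \<le> (\<Sum>i<n. X i \<omega>)} \<le> exp (-2 * x\<^sup>2 / (\<Sum>i<N. (b i - a i)\<^sup>2))"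
proof -
  define D where "D = (\<Sum>i<N. (b i - a i)\<^sup>2)"
  define l where "l = 4 * x / D"
  have "l > 0" using assms by (simp add: l_def D_def)
  let ?A = "{\<omega>\<in>space M. \<exists>n\<le>N. x \<le> (\<Sum>i<n. X i \<omega>)}"
  have disj: "disjoint_family_on (passage_event x) {..N}"
    by (auto simp: disjoint_family_on_def passage_event_def dest: first_passage_unique)
  have "?A \<subseteq> (\<Union>k\<le>N. passage_event x k)"
    by (auto simp: passage_event_def dest!: ex_first_passage) (meson atMost_iff order_trans)
  then have "exp (l * x) * emeasure M ?A \<le> exp (l * x) * (\<Sum>k\<le>N. emeasure M (passage_event x k))"
    by (intro mult_left_mono order_trans[OF emeasure_mono emeasure_subadditive_finite]) auto
  also have "\<dots> \<le> (\<Sum>k\<le>N. \<integral>\<^sup>+\<omega>. indicator (passage_event x k) \<omega> * ennreal (exp (l * (\<Sum>i<N. X i \<omega>))) \<partial>M)"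
    unfolding sum_distrib_left[where r = "ennreal (exp (l * x))"]
    using \<open>l > 0\<close> by (intro sum_mono emeasure_passage_event_le) auto
  also have "\<dots> = (\<integral>\<^sup>+\<omega>. indicator (\<Union>k\<le>N. passage_event x k) \<omega> * ennreal (exp (l * (\<Sum>i<N. X i \<omega>))) \<partial>M)"
    unfolding indicator_UN_disjoint[OF finite_atMost disj] sum_distrib_right
    by (rule nn_integral_sum[symmetric]) simp
  also have "\<dots> \<le> (\<integral>\<^sup>+\<omega>. exp (l * (\<Sum>i<N. X i \<omega>)) \<partial>M)"
    by (intro nn_integral_mono) (auto simp: indicator_def)
  also have "\<dots> \<le> exp (l\<^sup>2 * D / 8)"
    unfolding D_def using \<open>l > 0\<close> by (rule nn_integral_exp_sum_le[OF finite_lessThan])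
  finally have "exp (l * x) * prob ?A \<le> exp (l\<^sup>2 * D / 8)"
    by (simp add: emeasure_eq_measure ennreal_mult'[symmetric] del: ennreal_mult)
  then have "prob ?A \<le> exp (l\<^sup>2 * D / 8) / exp (l * x)"
    by (simp add: pos_le_divide_eq mult.commute)
  also have "\<dots> = exp (l\<^sup>2 * D / 8 - l * x)"
    by (rule exp_diff[symmetric])
  also have "l\<^sup>2 * D / 8 - l * x = -2 * x\<^sup>2 / D"
    using D_pos by (simp add: l_def D_def field_simps power2_eq_square)
  finally show ?thesis by (simp add: D_def)
qed

end

section \<open>Elementary estimates\<close>

lemma ln_gt_1:
  fixes x :: real
  assumes "3 \<le> x"
  shows "1 < ln x"
proof -
  have "exp 1 < x" using e_less_272 assms by simp
  then show ?thesis using assms ln_less_cancel_iff[of "exp 1" x] by simp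
qed

lemma ucb_f_eq: "3 \<le> t \<Longrightarrow> ucb_f t = ln (real t) + 3 * ln (ln (real t))"
  by (simp add: ucb_f_def max_def)

lemma ucb_f_pos: "0 < ucb_f t"
proof -
  have "1 < ln (real (max t 3))" by (rule ln_gt_1) simp
  then show ?thesis unfolding ucb_f_def by (smt (verit) ln_gt_zero)
qed

lemma ucb_f_mono: "t \<le> T \<Longrightarrow> ucb_f t \<le> ucb_f T"
proof -
  assume "t \<le> T"
  then have "ln (real (max t 3)) \<le> ln (real (max T 3))" by simp
  moreover have "1 < ln (real (max t 3))" by (rule ln_gt_1) simp
  ultimately show ?thesis unfolding ucb_f_def by (smt (verit) ln_le_cancel_iff)
qed

lemma sum_power_exp_neg_le:
  fixes \<alpha> :: real
  assumes "0 < \<alpha>"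
  shows "(\<Sum>j<N. exp (-\<alpha>) ^ j) \<le> 1 + 1 / \<alpha>"
proof -
  have q: "0 < exp (-\<alpha>)" "exp (-\<alpha>) < 1" using assms by auto
  have "(\<Sum>j<N. exp (-\<alpha>) ^ j) = (1 - exp (-\<alpha>) ^ N) / (1 - exp (-\<alpha>))"
    using q by (simp add: sum_gp_strict)
  also have "\<dots> \<le> 1 / (1 - exp (-\<alpha>))"
    using q by (intro divide_right_mono) auto
  also have "\<dots> \<le> 1 + 1 / \<alpha>"
    using exp_ge_add_one_self[of \<alpha>] assms by (simp add: exp_minus field_simps)
  finally show ?thesis .
qed

lemma sum_above_threshold_le:
  fixes p :: "nat \<Rightarrow> real"
  assumes "0 < \<alpha>" and "0 \<le> r"
    and tail: "\<And>n. 1 \<le> n \<Longrightarrow> r < real n \<Longrightarrow> p n \<le> exp (-\<alpha> * (real n - r))"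
  shows "(\<Sum>n | n \<in> {1..T} \<and> r < real n. p n) \<le> 1 + 1 / \<alpha>"
proof -
  define n\<^sub>0 where "n\<^sub>0 = nat \<lfloor>r\<rfloor> + 1"
  have "r < n\<^sub>0" using \<open>0 \<le> r\<close> by (simp add: n\<^sub>0_def) linarith
  have above_n\<^sub>0: "n\<^sub>0 \<le> n" if "r < real n" for n
  proof -
    have "\<lfloor>r\<rfloor> < int n" using that of_int_floor_le[of r] by linarith
    then show ?thesis using \<open>0 \<le> r\<close> by (simp add: n\<^sub>0_def Suc_le_eq nat_less_iff)
  qed
  have "(\<Sum>n | n \<in> {1..T} \<and> r < real n. p n) \<le> (\<Sum>n | n \<in> {1..T} \<and> r < real n. exp (-\<alpha>) ^ (n - n\<^sub>0))"
  proof (intro sum_mono)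
    fix n assume n: "n \<in> {n. n \<in> {1..T} \<and> r < real n}"
    then have "n\<^sub>0 \<le> n" using above_n\<^sub>0 by simp
    have "p n \<le> exp (-\<alpha> * (real n - r))" using n by (intro tail) auto
    also have "\<dots> \<le> exp (-\<alpha> * real (n - n\<^sub>0))"
      using \<open>n\<^sub>0 \<le> n\<close> \<open>r < n\<^sub>0\<close> \<open>0 < \<alpha>\<close> by (simp add: of_nat_diff)
    also have "\<dots> = exp (-\<alpha>) ^ (n - n\<^sub>0)"
      by (simp add: exp_of_nat_mult[symmetric] mult.commute)
    finally show "p n \<le> exp (-\<alpha>) ^ (n - n\<^sub>0)" .
  qed
  also have "\<dots> \<le> (\<Sum>n\<in>{n\<^sub>0..<T + n\<^sub>0}. exp (-\<alpha>) ^ (n - n\<^sub>0))"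
    using above_n\<^sub>0 by (intro sum_mono2) (auto simp: n\<^sub>0_def)
  also have "\<dots> = (\<Sum>j<T. exp (-\<alpha>) ^ j)"
    using sum.shift_bounds_nat_ivl[of "\<lambda>n. exp (-\<alpha>) ^ (n - n\<^sub>0)" 0 n\<^sub>0 T] by (simp add: lessThan_atLeast0)
  also have "\<dots> \<le> 1 + 1 / \<alpha>"
    by (rule sum_power_exp_neg_le[OF \<open>0 < \<alpha>\<close>])
  finally show ?thesis .
qed

lemma sum_le_threshold_plus_geometric:
  fixes p :: "nat \<Rightarrow> real"
  assumes le_1: "\<And>n. p n \<le> 1" and "0 < \<alpha>" and "0 \<le> r"
    and tail: "\<And>n. 1 \<le> n \<Longrightarrow> r < real n \<Longrightarrow> p n \<le> exp (-\<alpha> * (real n - r))"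
  shows "(\<Sum>n\<in>{1..T}. p n) \<le> r + (1 + 1 / \<alpha>)"
proof -
  let ?low = "{n\<in>{1..T}. real n \<le> r}" and ?high = "{n\<in>{1..T}. r < real n}"
  have "card ?low \<le> card {1..nat \<lfloor>r\<rfloor>}"
    by (intro card_mono) (auto simp: le_nat_floor)
  then have "real (card ?low) \<le> r"
    using \<open>0 \<le> r\<close> by (simp add: of_nat_nat) linarith
  then have low: "(\<Sum>n\<in>?low. p n) \<le> r"
    using le_1 sum_mono[of ?low p "\<lambda>_. 1"] by simp
  have "?low \<union> ?high = {1..T}" by auto
  moreover have "(\<Sum>n\<in>?low \<union> ?high. p n) = (\<Sum>n\<in>?low. p n) + (\<Sum>n\<in>?high. p n)"
    by (rule sum.union_disjoint) auto
  ultimately show ?thesis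
    using low sum_above_threshold_le[OF \<open>0 < \<alpha>\<close> \<open>0 \<le> r\<close> tail, of T] by simp
qed

text \<open>A lower bound on \<open>2 (\<Delta> \<surd>y - c)\<^sup>2\<close> that is linear in \<open>y\<close> beyond \<open>y = (c + 1)\<^sup>2 / \<Delta>\<^sup>2\<close>,
  turning the Gaussian tail into a geometric one.\<close>
lemma sq_diff_ge_linear:
  fixes \<Delta> c y :: real
  assumes "0 < \<Delta>" and "0 \<le> c" and "0 \<le> y" and "c + 1 \<le> \<Delta> * sqrt y"
  shows "2 * \<Delta>\<^sup>2 / (c + 1) * (y - (c + 1)\<^sup>2 / \<Delta>\<^sup>2) \<le> 2 * (\<Delta> * sqrt y - c)\<^sup>2"
proof -
  define z where "z = \<Delta> * sqrt y"
  have "2 * D / C * (y - C\<^sup>2 / D) = 2 * ((D * y - C\<^sup>2) / C)" if "D \<noteq> 0" "C \<noteq> 0" for D C :: real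
    using that by (simp add: field_simps power2_eq_square)
  then have "2 * \<Delta>\<^sup>2 / (c + 1) * (y - (c + 1)\<^sup>2 / \<Delta>\<^sup>2) = 2 * ((\<Delta>\<^sup>2 * y - (c + 1)\<^sup>2) / (c + 1))"
    using assms by simp
  also have "\<Delta>\<^sup>2 * y = z\<^sup>2"
    using \<open>0 \<le> y\<close> by (simp add: z_def power_mult_distrib)
  also have "(z - c)\<^sup>2 * (c + 1) - (z\<^sup>2 - (c + 1)\<^sup>2) = (z - c - 1)\<^sup>2 * c + c + 1"
    by (simp add: algebra_simps power2_eq_square)
  then have "(z\<^sup>2 - (c + 1)\<^sup>2) / (c + 1) \<le> (z - c)\<^sup>2"
    using \<open>0 \<le> c\<close> by (simp add: divide_simps) (smt (verit) zero_le_power2 mult_nonneg_nonneg)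
  finally show ?thesis by (simp add: z_def)
qed

lemma ex_power_bracket:
  fixes g y :: real
  assumes "1 < g" and "1 \<le> y"
  shows "\<exists>k. g ^ k \<le> y \<and> y < g ^ Suc k"
proof -
  obtain j where "y < g ^ j" using real_arch_pow[OF \<open>1 < g\<close>] by blast
  define k' where "k' = (LEAST j. y < g ^ j)"
  have "y < g ^ k'" unfolding k'_def by (rule LeastI) fact
  then have "k' \<noteq> 0" using \<open>1 \<le> y\<close> by (intro notI) simp
  then obtain k where "k' = Suc k" using not0_implies_Suc by blast
  moreover have "\<not> y < g ^ k"
    using not_less_Least[of k "\<lambda>j. y < g ^ j"] \<open>k' = Suc k\<close> by (simp add: k'_def)
  ultimately show ?thesis using \<open>y < g ^ k'\<close> by (auto simp: not_less)
qed

lemma ln_add_one_ge_div: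
  fixes x :: real
  assumes "0 < x"
  shows "x / (1 + x) \<le> ln (1 + x)"
proof -
  have "ln (1 / (1 + x)) \<le> 1 / (1 + x) - 1"
    using assms by (intro ln_le_minus_one) simp
  also have "1 / (1 + x) - 1 = - (x / (1 + x))"
    using assms by (simp add: field_simps)
  finally show ?thesis using assms by (simp add: ln_div)
qed

lemma less_power_one_plus_inverse:
  fixes f x :: real
  assumes "0 < f" and "1 \<le> x"
  shows "x < (1 + 1 / f) ^ (nat \<lfloor>(f + 1) * ln x\<rfloor> + 1)"
proof -
  define L where "L = nat \<lfloor>(f + 1) * ln x\<rfloor> + 1"
  have "1 / (f + 1) \<le> ln (1 + 1 / f)"
    using ln_add_one_ge_div[of "1 / f"] assms by (simp add: field_simps)
  have "(f + 1) * ln x < real L"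
    using assms unfolding L_def by (simp add: of_nat_nat) linarith
  have "ln x = ((f + 1) * ln x) * (1 / (f + 1))"
    using assms by simp
  also have "\<dots> < real L * (1 / (f + 1))"
    using \<open>(f + 1) * ln x < real L\<close> assms by (intro mult_strict_right_mono) auto
  also have "\<dots> \<le> real L * ln (1 + 1 / f)"
    using \<open>1 / (f + 1) \<le> ln (1 + 1 / f)\<close> by (intro mult_left_mono) auto
  also have "\<dots> = ln ((1 + 1 / f) ^ L)"
    using assms by (simp add: ln_realpow)
  finally have "ln x < ln ((1 + 1 / f) ^ L)" .
  moreover have "0 < (1 + 1 / f) ^ L"
    using assms by (simp add: add_pos_pos)
  ultimately have "x < (1 + 1 / f) ^ L"
    using ln_less_cancel_iff[of x "(1 + 1 / f) ^ L"] assms by linarith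
  then show ?thesis unfolding L_def .
qed

lemma ln_ln_diff_ge:
  fixes t :: real
  assumes "4 \<le> t"
  shows "1 / (t * ln t) \<le> ln (ln t) - ln (ln (t - 1))"
proof -
  have "1 < ln (t - 1)" "1 < ln t" using ln_gt_1[of "t - 1"] ln_gt_1[of t] assms by simp_all
  have "ln ((t - 1) / t) \<le> (t - 1) / t - 1"
    using assms by (intro ln_le_minus_one) simp
  then have "1 / t \<le> ln t - ln (t - 1)"
    using assms by (simp add: ln_div field_simps)
  have "ln (ln (t - 1) / ln t) \<le> ln (t - 1) / ln t - 1"
    using \<open>1 < ln (t - 1)\<close> \<open>1 < ln t\<close> by (intro ln_le_minus_one) simp
  then have "1 - ln (t - 1) / ln t \<le> ln (ln t) - ln (ln (t - 1))"
    using \<open>1 < ln (t - 1)\<close> \<open>1 < ln t\<close> by (simp add: ln_div)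
  have "1 / (t * ln t) = (1 / t) / ln t" by simp
  also have "\<dots> \<le> (ln t - ln (t - 1)) / ln t"
    using \<open>1 / t \<le> ln t - ln (t - 1)\<close> \<open>1 < ln t\<close> by (intro divide_right_mono) auto
  also have "\<dots> = 1 - ln (t - 1) / ln t"
    using \<open>1 < ln t\<close> by (simp add: field_simps)
  finally show ?thesis
    using \<open>1 - ln (t - 1) / ln t \<le> ln (ln t) - ln (ln (t - 1))\<close> by linarith
qed

lemma sum_inverse_mult_ln_le:
  fixes T :: nat
  assumes "3 \<le> T"
  shows "(\<Sum>t\<in>{4..T}. 1 / (real t * ln (real t))) \<le> ln (ln (real T))"
proof -
  have "(\<Sum>t\<in>{4..T}. 1 / (real t * ln (real t))) \<le> ln (ln (real T)) - ln (ln 3)"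
    using assms
  proof (induction T rule: dec_induct)
    case (step n)
    have "(\<Sum>t\<in>{4..Suc n}. 1 / (real t * ln (real t)))
        = (\<Sum>t\<in>{4..n}. 1 / (real t * ln (real t))) + 1 / (real (Suc n) * ln (real (Suc n)))"
      using step.hyps by (simp add: atLeastAtMostSuc_conv)
    also have "\<dots> \<le> (ln (ln (real n)) - ln (ln 3)) + (ln (ln (real (Suc n))) - ln (ln (real (Suc n) - 1)))"
      using step.IH ln_ln_diff_ge[of "real (Suc n)"] step.hyps by (intro add_mono) auto
    finally show ?case by simp
  qed simp
  moreover have "0 < ln (ln (3::real))" using ln_gt_1[of 3] by simp
  ultimately show ?thesis by linarith
qed

lemma peel_count_mult_exp_le:
  fixes t :: nat
  assumes "3 \<le> t"
  shows "real (nat \<lfloor>(ucb_f t + 1) * ln t\<rfloor> + 1) * exp (1 - ucb_f t) \<le> 4 * exp 1 / (t * ln t)"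
proof -
  define L where "L = ln (real t)"
  have "1 < L" unfolding L_def using ln_gt_1[of t] assms by simp
  have f: "ucb_f t = L + 3 * ln L" unfolding L_def by (rule ucb_f_eq[OF assms])
  have "0 < ln L" "ln L \<le> L - 1" using \<open>1 < L\<close> ln_le_minus_one[of L] by simp_all
  have "exp (- ucb_f t) = exp (- ln t) * exp (- (3 * ln L))"
    by (simp add: f L_def exp_add[symmetric])
  also have "\<dots> = 1 / (t * L ^ 3)"
  proof -
    have "exp (3 * ln L) = L ^ 3" using exp_of_nat_mult[of 3 "ln L"] \<open>1 < L\<close> by simp
    then show ?thesis using assms by (simp add: exp_minus inverse_eq_divide)
  qed
  finally have exp_f: "exp (- ucb_f t) = 1 / (t * L ^ 3)" .
  have "real (nat \<lfloor>(ucb_f t + 1) * L\<rfloor> + 1) \<le> (ucb_f t + 1) * L + 1"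
    using f \<open>0 < ln L\<close> \<open>1 < L\<close> by (simp add: of_nat_nat)
  also have "\<dots> \<le> (4 * L - 2) * L + 1"
    using f \<open>ln L \<le> L - 1\<close> \<open>1 < L\<close> by (intro add_right_mono mult_right_mono) auto
  also have "\<dots> = 4 * L * L - (2 * L - 1)"
    by (simp add: algebra_simps)
  also have "\<dots> \<le> 4 * L * L"
    using \<open>1 < L\<close> by simp
  finally have "real (nat \<lfloor>(ucb_f t + 1) * L\<rfloor> + 1) * exp (1 - ucb_f t) \<le> 4 * L * L * exp (1 - ucb_f t)"
    by (intro mult_right_mono) auto
  also have "\<dots> = 4 * L * L * (exp 1 * exp (- ucb_f t))"
    by (simp add: exp_add[symmetric])
  also have "\<dots> = 4 * exp 1 / (t * L)"
    using assms \<open>1 < L\<close> by (simp add: exp_f field_simps power3_eq_cube)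
  finally show ?thesis by (simp add: L_def)
qed

text \<open>The terms linear in \<open>\<surd>f(T)\<close> are absorbed by the \<open>\<surd>\<pi>\<close> term since
  \<open>5 \<surd>(f/2) \<le> 4 \<surd>f\<close>.\<close>
lemma expected_pulls_bound_arith:
  fixes T :: nat and \<Delta> :: real
  assumes "3 \<le> T" and "0 < \<Delta>"
  shows "1 + (2 + 4 * exp 1 * ln (ln T))
      + ((sqrt (ucb_f T / 2) + 1)\<^sup>2 / \<Delta>\<^sup>2 + (1 + (sqrt (ucb_f T / 2) + 1) / (2 * \<Delta>\<^sup>2)))
    \<le> ln T / (2 * \<Delta>\<^sup>2) + 2 * sqrt pi / \<Delta>\<^sup>2 * sqrt (ln T + 3 * ln (ln T))
       + (4 * exp 1 + 3 / (2 * \<Delta>\<^sup>2)) * ln (ln T) + 8 / \<Delta>\<^sup>2 + 6"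
proof -
  define L where "L = ln (real T)"
  define LL where "LL = ln (ln (real T))"
  define A where "A = 1 / \<Delta>\<^sup>2"
  have "0 < A" using \<open>0 < \<Delta>\<close> by (simp add: A_def)
  have f: "ucb_f T = L + 3 * LL" unfolding L_def LL_def by (rule ucb_f_eq[OF \<open>3 \<le> T\<close>])
  have "0 < L + 3 * LL" using ucb_f_pos[of T] f by simp
  define c where "c = sqrt ((L + 3 * LL) / 2)"
  define w where "w = sqrt (L + 3 * LL)"
  have "0 \<le> w" "c\<^sup>2 = (L + 3 * LL) / 2" "w\<^sup>2 = L + 3 * LL"
    using \<open>0 < L + 3 * LL\<close> by (simp_all add: c_def w_def)
  have "(5 * c)\<^sup>2 \<le> (4 * w)\<^sup>2"
    using \<open>c\<^sup>2 = _\<close> \<open>w\<^sup>2 = _\<close> \<open>0 < L + 3 * LL\<close> by (simp add: power_mult_distrib)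
  then have "5 * c \<le> 4 * w"
    by (rule power2_le_imp_le) (simp add: \<open>0 \<le> w\<close>)
  moreover have "w \<le> sqrt pi * w"
    using pi_gt3 \<open>0 \<le> w\<close> by (simp add: mult_le_cancel_right1)
  ultimately have "5 * (c * A) \<le> 4 * (sqrt pi * w * A)"
    using \<open>0 < A\<close> mult_right_mono[of "5 * c" "4 * (sqrt pi * w)" A] by (simp add: mult.assoc)
  then have "1 + (2 + 4 * exp 1 * LL) + ((L * A / 2 + 3 * (LL * A) / 2 + 2 * (c * A) + A) + (1 + (c * A / 2 + A / 2)))
      \<le> L * A / 2 + 2 * (sqrt pi * w * A) + (4 * exp 1 * LL + 3 * (LL * A) / 2) + 8 * A + 6"
    using \<open>0 < A\<close> by linarith
  moreover have "(sqrt (ucb_f T / 2) + 1)\<^sup>2 / \<Delta>\<^sup>2 = L * A / 2 + 3 * (LL * A) / 2 + 2 * (c * A) + A"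
  proof -
    have "(sqrt (ucb_f T / 2) + 1)\<^sup>2 / \<Delta>\<^sup>2 = (c\<^sup>2 + 2 * c + 1) * A"
      by (simp add: c_def f A_def power2_eq_square algebra_simps add_divide_distrib)
    then show ?thesis by (simp add: \<open>c\<^sup>2 = _\<close> algebra_simps)
  qed
  moreover have "(sqrt (ucb_f T / 2) + 1) / (2 * \<Delta>\<^sup>2) = c * A / 2 + A / 2"
    by (simp add: c_def f A_def add_divide_distrib)
  moreover have "2 * sqrt pi / \<Delta>\<^sup>2 * sqrt (ln T + 3 * ln (ln T)) = 2 * (sqrt pi * w * A)"
    by (simp add: A_def w_def L_def LL_def)
  moreover have "(4 * exp 1 + 3 / (2 * \<Delta>\<^sup>2)) * ln (ln T) = 4 * exp 1 * LL + 3 * (LL * A) / 2"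
    by (simp add: A_def LL_def algebra_simps)
  moreover have "ln T / (2 * \<Delta>\<^sup>2) = L * A / 2" "8 / \<Delta>\<^sup>2 = 8 * A"
    by (simp_all add: A_def L_def)
  ultimately show ?thesis
    unfolding LL_def[symmetric] by linarith
qed

section \<open>Runs of the policy\<close>

definition sample_index :: "(nat \<times> nat \<Rightarrow> real) \<Rightarrow> nat \<Rightarrow> nat \<Rightarrow> nat \<Rightarrow> real" where
  "sample_index \<omega> b n t = (\<Sum>i<n. \<omega> (b, i)) / real n + sqrt (ucb_f t / (2 * real n))"

definition index_below :: "nat \<Rightarrow> real \<Rightarrow> nat \<Rightarrow> (nat \<times> nat \<Rightarrow> real) set" where
  "index_below s m t = {\<omega>. \<exists>n\<in>{1..t}. sample_index \<omega> s n t < m}"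

definition index_reaches :: "nat \<Rightarrow> real \<Rightarrow> nat \<Rightarrow> nat \<Rightarrow> (nat \<times> nat \<Rightarrow> real) set" where
  "index_reaches a m T n = {\<omega>. m \<le> sample_index \<omega> a n T}"

lemma length_run [simp]: "length (run \<pi> \<omega> t) = t"
  by (induction t) (auto simp: Let_def)

lemma num_pulls_run_Suc:
  "num_pulls (run \<pi> \<omega> (Suc t)) b = num_pulls (run \<pi> \<omega> t) b + (if \<pi> (run \<pi> \<omega> t) = b then 1 else 0)"
  by (simp add: num_pulls_def Let_def)

lemma num_pulls_run_eq_card: "num_pulls (run \<pi> \<omega> T) b = card {t. t < T \<and> \<pi> (run \<pi> \<omega> t) = b}"
proof (induction T)
  case 0
  then show ?case by (simp add: num_pulls_def)
next
  case (Suc T)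
  have "{t. t < Suc T \<and> \<pi> (run \<pi> \<omega> t) = b}
      = {t. t < T \<and> \<pi> (run \<pi> \<omega> t) = b} \<union> (if \<pi> (run \<pi> \<omega> T) = b then {T} else {})"
    by (auto simp: less_Suc_eq)
  then show ?case
    using Suc by (simp add: num_pulls_run_Suc del: run.simps)
qed

lemma num_pulls_run_le: "num_pulls (run \<pi> \<omega> t) b \<le> t"
  unfolding num_pulls_def by (metis length_filter_le length_run)

lemma num_pulls_run_mono: "t \<le> t' \<Longrightarrow> num_pulls (run \<pi> \<omega> t) b \<le> num_pulls (run \<pi> \<omega> t') b"
  by (induction t' rule: dec_induct) (auto simp: num_pulls_run_Suc simp del: run.simps)

lemma num_pulls_run_less:
  assumes "\<pi> (run \<pi> \<omega> t) = b" and "t < t'"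
  shows "num_pulls (run \<pi> \<omega> t) b < num_pulls (run \<pi> \<omega> t') b"
  using num_pulls_run_mono[of "Suc t" t' \<pi> \<omega> b] assms by (simp add: num_pulls_run_Suc del: run.simps)

lemma inj_on_num_pulls_run: "inj_on (\<lambda>t. num_pulls (run \<pi> \<omega> t) b) {t. \<pi> (run \<pi> \<omega> t) = b}"
proof (rule inj_onI, rule ccontr)
  fix t t' assume "t \<in> {t. \<pi> (run \<pi> \<omega> t) = b}" "t' \<in> {t. \<pi> (run \<pi> \<omega> t) = b}" "t \<noteq> t'"
    and eq: "num_pulls (run \<pi> \<omega> t) b = num_pulls (run \<pi> \<omega> t') b"
  then consider "\<pi> (run \<pi> \<omega> t) = b" "t < t'" | "\<pi> (run \<pi> \<omega> t') = b" "t' < t"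
    by (auto simp: neq_iff)
  then show False
  proof cases
    case 1
    then show False using num_pulls_run_less[of \<pi> \<omega> t b t'] eq by simp
  next
    case 2
    then show False using num_pulls_run_less[of \<pi> \<omega> t' b t] eq by simp
  qed
qed

lemma filter_run:
  "filter (\<lambda>p. fst p = b) (run \<pi> \<omega> t) = map (\<lambda>i. (b, \<omega> (b, i))) [0..<num_pulls (run \<pi> \<omega> t) b]"
proof (induction t)
  case 0
  then show ?case by (simp add: num_pulls_def)
next
  case (Suc t)
  have run_Suc: "run \<pi> \<omega> (Suc t) = run \<pi> \<omega> t
      @ [(\<pi> (run \<pi> \<omega> t), \<omega> (\<pi> (run \<pi> \<omega> t), num_pulls (run \<pi> \<omega> t) (\<pi> (run \<pi> \<omega> t))))]"
    by (simp add: Let_def num_pulls_def)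
  show ?case
    using Suc
    by (cases "\<pi> (run \<pi> \<omega> t) = b") (subst num_pulls_run_Suc, subst run_Suc, simp del: run.simps)+
qed

lemma ucb_index_run:
  "ucb_index (run \<pi> \<omega> t) b = sample_index \<omega> b (num_pulls (run \<pi> \<omega> t) b) t"
  by (simp add: ucb_index_def sample_index_def emp_mean_def filter_run o_def
      interv_sum_list_conv_sum_set_nat atLeast0LessThan)

lemma num_pulls_run_pos:
  assumes "is_ucb_policy K \<pi>" and "b < K" and "K \<le> t"
  shows "1 \<le> num_pulls (run \<pi> \<omega> t) b"
proof -
  have "\<pi> (run \<pi> \<omega> b) = b" using assms(1,2) unfolding is_ucb_policy_def by simp
  then have "num_pulls (run \<pi> \<omega> b) b < num_pulls (run \<pi> \<omega> t) b"
    using assms(2,3) by (intro num_pulls_run_less) auto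
  then show ?thesis by simp
qed

lemma sample_index_mono: "t \<le> T \<Longrightarrow> sample_index \<omega> b n t \<le> sample_index \<omega> b n T"
  unfolding sample_index_def by (intro add_left_mono real_sqrt_le_mono divide_right_mono ucb_f_mono) auto

lemma pulled_index_reaches:
  assumes ucb: "is_ucb_policy K \<pi>" and "s < K" and "K \<le> t" and "t \<le> T"
    and pulled: "\<pi> (run \<pi> \<omega> t) = a" and "\<omega> \<notin> index_below s m t"
  shows "\<omega> \<in> index_reaches a m T (num_pulls (run \<pi> \<omega> t) a)"
proof -
  have "1 \<le> num_pulls (run \<pi> \<omega> t) s"
    using num_pulls_run_pos[OF ucb \<open>s < K\<close> \<open>K \<le> t\<close>] .
  then have "m \<le> sample_index \<omega> s (num_pulls (run \<pi> \<omega> t) s) t"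
    using \<open>\<omega> \<notin> index_below s m t\<close> num_pulls_run_le[of \<pi> \<omega> t s] by (auto simp: index_below_def not_less)
  also have "\<dots> = ucb_index (run \<pi> \<omega> t) s"
    by (rule ucb_index_run[symmetric])
  also have "\<dots> \<le> ucb_index (run \<pi> \<omega> t) a"
    using ucb \<open>s < K\<close> \<open>K \<le> t\<close> pulled unfolding is_ucb_policy_def by auto
  also have "\<dots> \<le> sample_index \<omega> a (num_pulls (run \<pi> \<omega> t) a) T"
    unfolding ucb_index_run using \<open>t \<le> T\<close> by (rule sample_index_mono)
  finally show ?thesis by (simp add: index_reaches_def)
qed

lemma sum_indicator_eq_card_filter:
  "finite S \<Longrightarrow> (\<Sum>t\<in>S. indicator (E t) x :: real) = real (card {t\<in>S. x \<in> E t})"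
  by (simp add: indicator_def sum.If_cases Collect_conj_eq Int_commute)

text \<open>A pull of \<open>a\<close> at a round \<open>t \<ge> K\<close> at which the index of \<open>s\<close> is not below \<open>m\<close> certifies
  \<open>m \<le>\<close> the index of \<open>a\<close> at its current sample size, and distinct pulls have distinct sample sizes.\<close>
lemma num_pulls_le_index_events:
  assumes ucb: "is_ucb_policy K \<pi>" and "s < K"
  shows "real (num_pulls (run \<pi> \<omega> T) a)
    \<le> 1 + (\<Sum>t\<in>{K..<T}. indicator (index_below s m t) \<omega>) + (\<Sum>n\<in>{1..T}. indicator (index_reaches a m T n) \<omega>)"
proof -
  let ?below = "{t\<in>{K..<T}. \<omega> \<in> index_below s m t}"
  let ?good = "{t\<in>{K..<T}. \<pi> (run \<pi> \<omega> t) = a \<and> \<omega> \<notin> index_below s m t}"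
  let ?reach = "{n\<in>{1..T}. \<omega> \<in> index_reaches a m T n}"
  have "{t. t < T \<and> \<pi> (run \<pi> \<omega> t) = a} \<subseteq> {a} \<union> ?below \<union> ?good"
    using ucb unfolding is_ucb_policy_def by (auto simp: not_le)
  then have "card {t. t < T \<and> \<pi> (run \<pi> \<omega> t) = a} \<le> card ({a} \<union> ?below \<union> ?good)"
    by (intro card_mono) auto
  also have "\<dots> \<le> card {a} + card ?below + card ?good"
    using card_Un_le[of "{a}" ?below] card_Un_le[of "{a} \<union> ?below" ?good] by linarith
  finally have "card {t. t < T \<and> \<pi> (run \<pi> \<omega> t) = a} \<le> 1 + card ?below + card ?good"
    by simp
  moreover have "card ?good \<le> card ?reach"
  proof (rule card_inj_on_le[where f = "\<lambda>t. num_pulls (run \<pi> \<omega> t) a"])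
    show "inj_on (\<lambda>t. num_pulls (run \<pi> \<omega> t) a) ?good"
      by (rule inj_on_subset[OF inj_on_num_pulls_run]) auto
    show "(\<lambda>t. num_pulls (run \<pi> \<omega> t) a) ` ?good \<subseteq> ?reach"
    proof (rule image_subsetI)
      fix t assume "t \<in> ?good"
      then have t: "K \<le> t" "t < T" "\<pi> (run \<pi> \<omega> t) = a" "\<omega> \<notin> index_below s m t" by auto
      then have "a < K" using ucb unfolding is_ucb_policy_def by auto
      then have "1 \<le> num_pulls (run \<pi> \<omega> t) a" using num_pulls_run_pos[OF ucb _ \<open>K \<le> t\<close>] by blast
      moreover have "num_pulls (run \<pi> \<omega> t) a \<le> T" using num_pulls_run_le[of \<pi> \<omega> t a] t by simp
      moreover have "\<omega> \<in> index_reaches a m T (num_pulls (run \<pi> \<omega> t) a)"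
        using t by (intro pulled_index_reaches[OF ucb \<open>s < K\<close>]) auto
      ultimately show "num_pulls (run \<pi> \<omega> t) a \<in> ?reach" by simp
    qed
  qed simp
  ultimately show ?thesis
    by (simp add: num_pulls_run_eq_card sum_indicator_eq_card_filter)
qed

section \<open>The reward table\<close>

locale bandit =
  fixes K :: nat and \<nu> :: "nat \<Rightarrow> real measure"
  assumes K_pos: "0 < K"
    and prob_space_arm: "\<And>b. b < K \<Longrightarrow> prob_space (\<nu> b)"
    and sets_arm: "\<And>b. b < K \<Longrightarrow> sets (\<nu> b) = sets borel"
    and AE_arm_unit: "\<And>b. b < K \<Longrightarrow> AE x in \<nu> b. x \<in> {0..1}"
begin

abbreviation R :: "(nat \<times> nat \<Rightarrow> real) measure" where
  "R \<equiv> reward_space K \<nu>"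

sublocale R: prob_space R
  unfolding reward_space_def by (rule prob_space_PiM) (auto intro: prob_space_arm)

lemma measurable_reward: "b < K \<Longrightarrow> (\<lambda>\<omega>. \<omega> (b, i)) \<in> measurable R (\<nu> b)"
  unfolding reward_space_def
  using measurable_component_singleton[of "(b, i)" "{0..<K} \<times> UNIV" "\<lambda>i. \<nu> (fst i)"] by simp

lemma borel_measurable_reward: "b < K \<Longrightarrow> (\<lambda>\<omega>. \<omega> (b, i)) \<in> borel_measurable R"
  using measurable_reward measurable_cong_sets[OF refl sets_arm] by blast

lemma distr_reward: "b < K \<Longrightarrow> distr R (\<nu> b) (\<lambda>\<omega>. \<omega> (b, i)) = \<nu> b"
  unfolding reward_space_def
  using distr_PiM_component[of "{0..<K} \<times> UNIV" "\<lambda>i. \<nu> (fst i)" "(b, i)"] prob_space_arm by auto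

lemma AE_reward_unit:
  assumes "b < K"
  shows "AE \<omega> in R. \<omega> (b, i) \<in> {0..1}"
  unfolding reward_space_def
proof (rule AE_PiM_component)
  show "AE x in \<nu> (fst (b, i)). x \<in> {0..1}"
    unfolding fst_conv by (rule AE_arm_unit[OF assms])
qed (use assms prob_space_arm in auto)

lemma expectation_reward:
  assumes "b < K"
  shows "R.expectation (\<lambda>\<omega>. \<omega> (b, i)) = arm_mean \<nu> b"
proof -
  have "measurable (\<nu> b) borel = measurable borel (borel :: real measure)"
    by (rule measurable_cong_sets[OF sets_arm[OF assms] refl])
  then have "(\<lambda>x. x) \<in> borel_measurable (\<nu> b)"
    by simp
  then have "R.expectation (\<lambda>\<omega>. \<omega> (b, i)) = (\<integral>x. x \<partial>distr R (\<nu> b) (\<lambda>\<omega>. \<omega> (b, i)))"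
    by (rule integral_distr[OF measurable_reward[OF assms], symmetric])
  then show ?thesis by (simp add: distr_reward[OF assms] arm_mean_def)
qed

lemma indep_rewards: "R.indep_vars (\<lambda>i. \<nu> (fst i)) (\<lambda>i \<omega>. \<omega> i) ({0..<K} \<times> UNIV)"
proof -
  have "R = PiM ({0..<K} \<times> UNIV) (\<lambda>i. distr R (\<nu> (fst i)) (\<lambda>\<omega>. \<omega> i))"
    using distr_reward by (auto simp: reward_space_def intro!: PiM_cong)
  moreover have "distr R (PiM ({0..<K} \<times> UNIV) (\<lambda>i. \<nu> (fst i))) (\<lambda>\<omega>. \<lambda>i\<in>{0..<K} \<times> UNIV. \<omega> i) = R"
    by (subst distr_cong[where g = "\<lambda>\<omega>. \<omega>"]) (auto simp: reward_space_def space_PiM PiE_def extensional_restrict)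
  ultimately show ?thesis
    using K_pos measurable_reward
    by (subst R.indep_vars_iff_distr_eq_PiM') (auto simp: reward_space_def)
qed

lemma indep_arm_rewards:
  assumes "b < K"
  shows "R.indep_vars (\<lambda>_. borel) (\<lambda>i \<omega>. \<omega> (b, i)) UNIV"
proof -
  have "R.indep_vars (\<lambda>i. \<nu> (fst (b, i))) (\<lambda>i \<omega>. \<omega> (b, i)) UNIV"
    by (rule R.indep_vars_reindex[OF indep_rewards]) (use assms in \<open>auto simp: inj_on_def\<close>)
  then show ?thesis
    using sets_arm[OF assms] borel_measurable_reward[OF assms] unfolding R.indep_vars_def2 by auto
qed

lemma integrable_reward:
  assumes "b < K"
  shows "integrable R (\<lambda>\<omega>. \<omega> (b, i))"
proof (rule R.integrable_const_bound[where B = 1])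
  show "AE \<omega> in R. norm (\<omega> (b, i)) \<le> 1"
    using AE_reward_unit[OF assms, of i] by eventually_elim auto
qed (rule borel_measurable_reward[OF assms])

definition deviation_event :: "real \<Rightarrow> nat \<Rightarrow> nat \<Rightarrow> real \<Rightarrow> (nat \<times> nat \<Rightarrow> real) set" where
  "deviation_event \<sigma> b N x = {\<omega>\<in>space R. \<exists>n\<le>N. x \<le> (\<Sum>i<n. \<sigma> * (\<omega> (b, i) - arm_mean \<nu> b))}"

lemma prob_deviation_event_le:
  assumes b: "b < K" and \<sigma>: "\<sigma> \<in> {-1, 1}" and "x > 0" and "N > 0"
  shows "R.prob (deviation_event \<sigma> b N x) \<le> exp (-2 * x\<^sup>2 / N)"
proof -
  define \<mu> where "\<mu> = arm_mean \<nu> b"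
  define c where "c = (if \<sigma> = 1 then - \<mu> else \<mu> - 1)"
  interpret deviations: indep_centered_bounded_sequence R "\<lambda>i \<omega>. \<sigma> * (\<omega> (b, i) - \<mu>)" "\<lambda>_. c" "\<lambda>_. c + 1"
  proof
    show "R.indep_vars (\<lambda>_. borel) (\<lambda>i \<omega>. \<sigma> * (\<omega> (b, i) - \<mu>)) UNIV"
      by (rule R.indep_vars_compose2[OF indep_arm_rewards[OF b]]) auto
    show "AE \<omega> in R. \<sigma> * (\<omega> (b, i) - \<mu>) \<in> {c..c + 1}" for i
      using AE_reward_unit[OF b, of i] by eventually_elim (use \<sigma> in \<open>auto simp: c_def\<close>)
    show "R.expectation (\<lambda>\<omega>. \<sigma> * (\<omega> (b, i) - \<mu>)) = 0" for i
      using integrable_reward[OF b, of i] by (simp add: expectation_reward[OF b] R.prob_space \<mu>_def)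
  qed
  show ?thesis
    using deviations.maximal_Hoeffding_ineq[OF \<open>x > 0\<close>, of N] \<open>N > 0\<close>
    by (simp add: \<mu>_def deviation_event_def)
qed

lemma borel_measurable_sample_index:
  assumes "b < K"
  shows "(\<lambda>\<omega>. sample_index \<omega> b n t) \<in> borel_measurable R"
proof -
  note [measurable] = borel_measurable_reward[OF assms]
  show ?thesis unfolding sample_index_def by measurable
qed

lemma sets_index_below: "s < K \<Longrightarrow> space R \<inter> index_below s m t \<in> R.events"
proof -
  assume "s < K"
  note [measurable] = borel_measurable_sample_index[OF \<open>s < K\<close>]
  have "space R \<inter> index_below s m t = {\<omega>\<in>space R. \<exists>n\<in>{1..t}. sample_index \<omega> s n t < m}"
    by (auto simp: index_below_def)
  also have "\<dots> \<in> R.events" by measurable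
  finally show ?thesis .
qed

lemma sets_index_reaches: "a < K \<Longrightarrow> space R \<inter> index_reaches a m T n \<in> R.events"
proof -
  assume "a < K"
  note [measurable] = borel_measurable_sample_index[OF \<open>a < K\<close>]
  have "space R \<inter> index_reaches a m T n = {\<omega>\<in>space R. m \<le> sample_index \<omega> a n T}"
    by (auto simp: index_reaches_def)
  also have "\<dots> \<in> R.events" by measurable
  finally show ?thesis .
qed

lemma sets_deviation_event: "b < K \<Longrightarrow> deviation_event \<sigma> b N x \<in> R.events"
proof -
  assume "b < K"
  note [measurable] = borel_measurable_reward[OF \<open>b < K\<close>]
  show ?thesis unfolding deviation_event_def by measurable
qed

lemma prob_index_reaches_le:
  assumes "a < K" and "1 \<le> n" and gap: "sqrt (ucb_f T / 2) < (m - arm_mean \<nu> a) * sqrt n"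
  shows "R.prob (space R \<inter> index_reaches a m T n)
    \<le> exp (-2 * ((m - arm_mean \<nu> a) * sqrt n - sqrt (ucb_f T / 2))\<^sup>2)"
proof -
  define c where "c = sqrt (ucb_f T / 2)"
  define x where "x = sqrt n * ((m - arm_mean \<nu> a) * sqrt n - c)"
  have "0 < sqrt n" using \<open>1 \<le> n\<close> by simp
  have "space R \<inter> index_reaches a m T n \<subseteq> deviation_event 1 a n x"
  proof clarify
    fix \<omega> assume "\<omega> \<in> space R" "\<omega> \<in> index_reaches a m T n"
    then have "m \<le> (\<Sum>i<n. \<omega> (a, i)) / n + c / sqrt n"
      by (simp add: index_reaches_def sample_index_def c_def real_sqrt_divide real_sqrt_mult)
    then have "n * m \<le> n * ((\<Sum>i<n. \<omega> (a, i)) / n + c / sqrt n)"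
      by (simp add: mult_left_mono)
    also have "\<dots> = (\<Sum>i<n. \<omega> (a, i)) + c * (real n / sqrt n)"
      using \<open>0 < sqrt n\<close> by (simp add: distrib_left)
    also have "real n / sqrt n = sqrt n"
      by (rule real_div_sqrt) simp
    finally have "n * m \<le> (\<Sum>i<n. \<omega> (a, i)) + c * sqrt n" .
    then have "x \<le> (\<Sum>i<n. 1 * (\<omega> (a, i) - arm_mean \<nu> a))"
      by (simp add: x_def sum_subtractf algebra_simps)
    then show "\<omega> \<in> deviation_event 1 a n x"
      using \<open>\<omega> \<in> space R\<close> by (auto simp: deviation_event_def)
  qed
  then have "R.prob (space R \<inter> index_reaches a m T n) \<le> R.prob (deviation_event 1 a n x)"
    by (intro R.finite_measure_mono sets_deviation_event \<open>a < K\<close>)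
  also have "\<dots> \<le> exp (-2 * x\<^sup>2 / n)"
    using gap \<open>1 \<le> n\<close> \<open>0 < sqrt n\<close>
    by (intro prob_deviation_event_le \<open>a < K\<close>) (auto simp: x_def c_def)
  also have "-2 * x\<^sup>2 / n = -2 * ((m - arm_mean \<nu> a) * sqrt n - c)\<^sup>2"
    using \<open>1 \<le> n\<close> by (simp add: x_def power_mult_distrib)
  finally show ?thesis by (simp add: c_def)
qed

lemma sum_prob_index_reaches_le:
  assumes "a < K" and gap: "0 < m - arm_mean \<nu> a"
  shows "(\<Sum>n\<in>{1..T}. R.prob (space R \<inter> index_reaches a m T n))
    \<le> (sqrt (ucb_f T / 2) + 1)\<^sup>2 / (m - arm_mean \<nu> a)\<^sup>2
       + (1 + (sqrt (ucb_f T / 2) + 1) / (2 * (m - arm_mean \<nu> a)\<^sup>2))"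
proof -
  define \<Delta> where "\<Delta> = m - arm_mean \<nu> a"
  define c where "c = sqrt (ucb_f T / 2)"
  have "0 < \<Delta>" "0 \<le> c" using gap ucb_f_pos[of T] by (simp_all add: \<Delta>_def c_def)
  have "(\<Sum>n\<in>{1..T}. R.prob (space R \<inter> index_reaches a m T n))
      \<le> (c + 1)\<^sup>2 / \<Delta>\<^sup>2 + (1 + 1 / (2 * \<Delta>\<^sup>2 / (c + 1)))"
  proof (rule sum_le_threshold_plus_geometric)
    fix n :: nat assume "1 \<le> n" and "(c + 1)\<^sup>2 / \<Delta>\<^sup>2 < real n"
    then have "sqrt ((c + 1)\<^sup>2 / \<Delta>\<^sup>2) < sqrt n" by (intro real_sqrt_less_mono)
    then have "c + 1 < \<Delta> * sqrt n"
      using \<open>0 < \<Delta>\<close> \<open>0 \<le> c\<close> by (simp add: real_sqrt_divide field_simps)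
    then have exponent: "2 * \<Delta>\<^sup>2 / (c + 1) * (real n - (c + 1)\<^sup>2 / \<Delta>\<^sup>2) \<le> 2 * (\<Delta> * sqrt n - c)\<^sup>2"
      using \<open>0 < \<Delta>\<close> \<open>0 \<le> c\<close> by (intro sq_diff_ge_linear) auto
    have "R.prob (space R \<inter> index_reaches a m T n) \<le> exp (-2 * (\<Delta> * sqrt n - c)\<^sup>2)"
      using \<open>1 \<le> n\<close> \<open>c + 1 < \<Delta> * sqrt n\<close>
      unfolding \<Delta>_def c_def by (intro prob_index_reaches_le \<open>a < K\<close>) auto
    also have "\<dots> \<le> exp (- (2 * \<Delta>\<^sup>2 / (c + 1)) * (real n - (c + 1)\<^sup>2 / \<Delta>\<^sup>2))"
      using exponent by simp
    finally show "R.prob (space R \<inter> index_reaches a m T n)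
        \<le> exp (- (2 * \<Delta>\<^sup>2 / (c + 1)) * (real n - (c + 1)\<^sup>2 / \<Delta>\<^sup>2))" .
  qed (use \<open>0 < \<Delta>\<close> \<open>0 \<le> c\<close> in auto)
  then show ?thesis by (simp add: \<Delta>_def c_def)
qed

text \<open>Peeling: a sample size \<open>n \<in> [g\<^sup>k, g\<^sup>k\<^sup>+\<^sup>1)\<close> at which the index falls below the mean forces
  a lower deviation of at least \<open>\<surd>(g\<^sup>k f(t) / 2)\<close> within the first \<open>\<lfloor>g\<^sup>k\<^sup>+\<^sup>1\<rfloor>\<close> samples.\<close>
lemma index_below_subset_peels:
  assumes "1 < g" and "real t < g ^ L"
  shows "space R \<inter> index_below s (arm_mean \<nu> s) t
    \<subseteq> (\<Union>k<L. deviation_event (-1) s (nat \<lfloor>g ^ Suc k\<rfloor>) (sqrt (g ^ k * ucb_f t / 2)))"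
proof clarify
  fix \<omega> assume "\<omega> \<in> space R" "\<omega> \<in> index_below s (arm_mean \<nu> s) t"
  then obtain n where n: "1 \<le> n" "n \<le> t" and below: "sample_index \<omega> s n t < arm_mean \<nu> s"
    by (auto simp: index_below_def)
  obtain k where k: "g ^ k \<le> real n" "real n < g ^ Suc k"
    using ex_power_bracket[OF \<open>1 < g\<close>, of "real n"] n by auto
  have "k < L"
  proof (rule ccontr)
    assume "\<not> k < L"
    then have "g ^ L \<le> g ^ k" using \<open>1 < g\<close> by (intro power_increasing) auto
    then show False using k n \<open>real t < g ^ L\<close> by linarith
  qed
  have "n \<le> nat \<lfloor>g ^ Suc k\<rfloor>"
    using k by (simp add: le_nat_floor)
  have "real n * sqrt (ucb_f t / (2 * n)) = sqrt ((real n)\<^sup>2 * (ucb_f t / (2 * n)))"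
    by (subst real_sqrt_mult) simp
  also have "(real n)\<^sup>2 * (ucb_f t / (2 * n)) = n * ucb_f t / 2"
    using n by (simp add: power2_eq_square)
  finally have "real n * sqrt (ucb_f t / (2 * n)) = sqrt (n * ucb_f t / 2)" .
  moreover have "real n * sample_index \<omega> s n t < real n * arm_mean \<nu> s"
    using below n by (intro mult_strict_left_mono) auto
  ultimately have "sqrt (n * ucb_f t / 2) < (\<Sum>i<n. -1 * (\<omega> (s, i) - arm_mean \<nu> s))"
    using n by (simp add: sample_index_def distrib_left sum_subtractf)
  moreover have "sqrt (g ^ k * ucb_f t / 2) \<le> sqrt (n * ucb_f t / 2)"
    using k ucb_f_pos[of t] by (simp add: mult_right_mono)
  ultimately have "sqrt (g ^ k * ucb_f t / 2) \<le> (\<Sum>i<n. -1 * (\<omega> (s, i) - arm_mean \<nu> s))"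
    by linarith
  then have "\<omega> \<in> deviation_event (-1) s (nat \<lfloor>g ^ Suc k\<rfloor>) (sqrt (g ^ k * ucb_f t / 2))"
    using \<open>n \<le> nat \<lfloor>g ^ Suc k\<rfloor>\<close> \<open>\<omega> \<in> space R\<close> unfolding deviation_event_def by blast
  then show "\<omega> \<in> (\<Union>k<L. deviation_event (-1) s (nat \<lfloor>g ^ Suc k\<rfloor>) (sqrt (g ^ k * ucb_f t / 2)))"
    using \<open>k < L\<close> by blast
qed

lemma prob_peel_le:
  assumes "s < K" and "0 < f"
  shows "R.prob (deviation_event (-1) s (nat \<lfloor>(1 + 1 / f) ^ Suc k\<rfloor>) (sqrt ((1 + 1 / f) ^ k * f / 2)))
    \<le> exp (1 - f)"
proof -
  define g where "g = 1 + 1 / f"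
  have "1 < g" using assms by (simp add: g_def)
  then have "1 \<le> g ^ Suc k" by (intro one_le_power) simp
  have "0 < g ^ k" using \<open>1 < g\<close> by simp
  have N: "1 \<le> nat \<lfloor>g ^ Suc k\<rfloor>" "real (nat \<lfloor>g ^ Suc k\<rfloor>) \<le> g ^ Suc k"
    using \<open>1 \<le> g ^ Suc k\<close> by (simp_all only: le_nat_floor of_nat_1) (simp add: of_nat_nat)
  have "-2 * (sqrt (g ^ k * f / 2))\<^sup>2 / nat \<lfloor>g ^ Suc k\<rfloor> = - (g ^ k * f / nat \<lfloor>g ^ Suc k\<rfloor>)"
    using \<open>0 < g ^ k\<close> \<open>0 < f\<close> by simp
  also have "\<dots> \<le> - (g ^ k * f / g ^ Suc k)"
    using N \<open>0 < g ^ k\<close> \<open>0 < f\<close> by (intro le_imp_neg_le divide_left_mono) auto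
  also have "g ^ k * f / g ^ Suc k = f / g"
    using \<open>0 < g ^ k\<close> by simp
  also have "f / g = f * f / (f + 1)"
    using \<open>0 < f\<close> by (simp add: g_def field_simps)
  also have "- (f * f / (f + 1)) \<le> 1 - f"
    using \<open>0 < f\<close> by (simp add: field_simps)
  finally have exponent: "-2 * (sqrt (g ^ k * f / 2))\<^sup>2 / nat \<lfloor>g ^ Suc k\<rfloor> \<le> 1 - f" .
  have "R.prob (deviation_event (-1) s (nat \<lfloor>g ^ Suc k\<rfloor>) (sqrt (g ^ k * f / 2)))
      \<le> exp (-2 * (sqrt (g ^ k * f / 2))\<^sup>2 / nat \<lfloor>g ^ Suc k\<rfloor>)"
    using \<open>0 < g ^ k\<close> \<open>0 < f\<close> N by (intro prob_deviation_event_le \<open>s < K\<close>) auto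
  also have "\<dots> \<le> exp (1 - f)"
    using exponent by simp
  finally show ?thesis by (simp add: g_def)
qed

lemma prob_index_below_le:
  assumes "s < K" and "3 \<le> t"
  shows "R.prob (space R \<inter> index_below s (arm_mean \<nu> s) t) \<le> 4 * exp 1 / (t * ln t)"
proof -
  define f where "f = ucb_f t"
  define L where "L = nat \<lfloor>(f + 1) * ln t\<rfloor> + 1"
  define peel where "peel k = deviation_event (-1) s (nat \<lfloor>(1 + 1 / f) ^ Suc k\<rfloor>) (sqrt ((1 + 1 / f) ^ k * f / 2))" for k
  have "0 < f" by (simp add: f_def ucb_f_pos)
  have "space R \<inter> index_below s (arm_mean \<nu> s) t \<subseteq> (\<Union>k<L. peel k)"
    unfolding peel_def f_def using \<open>0 < f\<close> less_power_one_plus_inverse[OF \<open>0 < f\<close>, of t] assms(2)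
    by (intro index_below_subset_peels) (auto simp: L_def f_def)
  then have "R.prob (space R \<inter> index_below s (arm_mean \<nu> s) t) \<le> R.prob (\<Union>k<L. peel k)"
    by (intro R.finite_measure_mono) (auto simp: peel_def intro: sets_deviation_event \<open>s < K\<close>)
  also have "\<dots> \<le> (\<Sum>k<L. R.prob (peel k))"
    by (intro R.finite_measure_subadditive_finite) (auto simp: peel_def intro: sets_deviation_event \<open>s < K\<close>)
  also have "\<dots> \<le> (\<Sum>k<L. exp (1 - f))"
    unfolding peel_def by (intro sum_mono prob_peel_le \<open>s < K\<close> \<open>0 < f\<close>)
  also have "\<dots> \<le> 4 * exp 1 / (t * ln t)"
    using peel_count_mult_exp_le[OF \<open>3 \<le> t\<close>] by (simp add: L_def f_def)
  finally show ?thesis .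
qed

lemma sum_prob_index_below_le:
  assumes "s < K" and "2 \<le> K" and "3 \<le> T"
  shows "(\<Sum>t\<in>{K..<T}. R.prob (space R \<inter> index_below s (arm_mean \<nu> s) t)) \<le> 2 + 4 * exp 1 * ln (ln T)"
proof -
  define b where "b t = (if t \<le> 3 then 1 else 4 * exp 1 / (real t * ln t))" for t :: nat
  have b_nonneg: "0 \<le> b t" for t
    using ln_gt_1[of "real t"] by (auto simp: b_def)
  have "(\<Sum>t\<in>{K..<T}. R.prob (space R \<inter> index_below s (arm_mean \<nu> s) t)) \<le> (\<Sum>t\<in>{K..<T}. b t)"
    using prob_index_below_le[OF \<open>s < K\<close>] by (intro sum_mono) (auto simp: b_def)
  also have "\<dots> \<le> (\<Sum>t\<in>{2..3} \<union> {4..T}. b t)"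
    using \<open>2 \<le> K\<close> b_nonneg by (intro sum_mono2) auto
  also have "\<dots> = 2 + 4 * exp 1 * (\<Sum>t\<in>{4..T}. 1 / (real t * ln t))"
    by (subst sum.union_disjoint) (auto simp: b_def sum_distrib_left numeral_eq_Suc)
  also have "\<dots> \<le> 2 + 4 * exp 1 * ln (ln T)"
    using sum_inverse_mult_ln_le[OF \<open>3 \<le> T\<close>] by simp
  finally show ?thesis .
qed

text \<open>The policy is an arbitrary function of histories, so the number of pulls need not be
  measurable; \<open>integral_mono'\<close> needs integrability of the upper bound only, the integral of a
  non-integrable function being \<open>0\<close>.\<close>
lemma expected_pulls_le:
  assumes ucb: "is_ucb_policy K \<pi>" and "s < K" and "a < K"
  shows "(\<integral>\<omega>. real (num_pulls (run \<pi> \<omega> T) a) \<partial>R)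
    \<le> 1 + (\<Sum>t\<in>{K..<T}. R.prob (space R \<inter> index_below s m t))
        + (\<Sum>n\<in>{1..T}. R.prob (space R \<inter> index_reaches a m T n))"
proof -
  have below: "integrable R (indicator (index_below s m t) :: _ \<Rightarrow> real)" for t
    using sets_index_below[OF \<open>s < K\<close>] R.emeasure_finite
    by (simp add: integrable_indicator_iff Int_commute less_top[symmetric])
  have reaches: "integrable R (indicator (index_reaches a m T n) :: _ \<Rightarrow> real)" for n
    using sets_index_reaches[OF \<open>a < K\<close>] R.emeasure_finite
    by (simp add: integrable_indicator_iff Int_commute less_top[symmetric])
  have "(\<integral>\<omega>. real (num_pulls (run \<pi> \<omega> T) a) \<partial>R)
      \<le> (\<integral>\<omega>. 1 + (\<Sum>t\<in>{K..<T}. indicator (index_below s m t) \<omega>)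
              + (\<Sum>n\<in>{1..T}. indicator (index_reaches a m T n) \<omega>) \<partial>R)"
    using below reaches num_pulls_le_index_events[OF ucb \<open>s < K\<close>]
    by (intro integral_mono') (auto intro!: add_nonneg_nonneg sum_nonneg)
  also have "\<dots> = 1 + (\<Sum>t\<in>{K..<T}. R.prob (space R \<inter> index_below s m t))
        + (\<Sum>n\<in>{1..T}. R.prob (space R \<inter> index_reaches a m T n))"
    using below reaches by (simp add: integral_sum Int_commute R.prob_space)
  finally show ?thesis .
qed

end

theorem corollary2:
  fixes K :: nat and \<nu> :: "nat \<Rightarrow> real measure" and \<pi> :: "history \<Rightarrow> nat"
    and a T :: nat
  assumes "K \<ge> 2"
    and "\<And>b. b < K \<Longrightarrow> prob_space (\<nu> b)"
    and "\<And>b. b < K \<Longrightarrow> sets (\<nu> b) = sets borel"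
    and "\<And>b. b < K \<Longrightarrow> AE x in \<nu> b. x \<in> {0..1}"
    and "is_ucb_policy K \<pi>"
    and "a < K"
    and "arm_mean \<nu> a < opt_mean K \<nu>"
    and "T \<ge> 3"
  shows "(\<integral>\<omega>. real (num_pulls (run \<pi> \<omega> T) a) \<partial>reward_space K \<nu>)
    \<le> ln (real T) / (2 * (opt_mean K \<nu> - arm_mean \<nu> a)\<^sup>2)
       + 2 * sqrt pi / (opt_mean K \<nu> - arm_mean \<nu> a)\<^sup>2
           * sqrt (ln (real T) + 3 * ln (ln (real T)))
       + (4 * exp 1 + 3 / (2 * (opt_mean K \<nu> - arm_mean \<nu> a)\<^sup>2)) * ln (ln (real T))
       + 8 / (opt_mean K \<nu> - arm_mean \<nu> a)\<^sup>2 + 6"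
proof -
  interpret bandit K \<nu>
  proof (rule bandit.intro)
    show "0 < K" using \<open>K \<ge> 2\<close> by simp
  qed (fact assms(2-4))+
  have "opt_mean K \<nu> \<in> arm_mean \<nu> ` {0..<K}"
    unfolding opt_mean_def using \<open>K \<ge> 2\<close> by (intro Max_in) auto
  then obtain s where "s < K" and s_opt: "arm_mean \<nu> s = opt_mean K \<nu>"
    by auto
  have "(\<integral>\<omega>. real (num_pulls (run \<pi> \<omega> T) a) \<partial>R)
      \<le> 1 + (\<Sum>t\<in>{K..<T}. R.prob (space R \<inter> index_below s (arm_mean \<nu> s) t))
          + (\<Sum>n\<in>{1..T}. R.prob (space R \<inter> index_reaches a (opt_mean K \<nu>) T n))"
    using expected_pulls_le[OF assms(5) \<open>s < K\<close> assms(6)] by (simp add: s_opt)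
  also have "\<dots> \<le> 1 + (2 + 4 * exp 1 * ln (ln T))
      + ((sqrt (ucb_f T / 2) + 1)\<^sup>2 / (opt_mean K \<nu> - arm_mean \<nu> a)\<^sup>2
         + (1 + (sqrt (ucb_f T / 2) + 1) / (2 * (opt_mean K \<nu> - arm_mean \<nu> a)\<^sup>2)))"
    using sum_prob_index_below_le[OF \<open>s < K\<close> \<open>K \<ge> 2\<close> \<open>T \<ge> 3\<close>]
      sum_prob_index_reaches_le[OF \<open>a < K\<close>, of "opt_mean K \<nu>" T] assms(7)
    by (intro add_mono) auto
  finally show ?thesis
    using expected_pulls_bound_arith[OF \<open>T \<ge> 3\<close>, of "opt_mean K \<nu> - arm_mean \<nu> a"] assms(7)
    by simp
qed

end
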